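(* For $n \geq 3$, the cycle $C_n$ is diametrical (i.e. $\Gamma_b(C_n) = \mathrm{diam}(C_n)$) if and only if $n \in \{3,4,5\}$.
   Context: Let $G=(V,E)$ be a finite connected graph with distance $d(u,v)$, eccentricity $e(v)=\max_w d(v,w)$ and diameter $\mathrm{diam}(G)=\max_v e(v)$. A broadcast is a function $f: V\to\{0,\dots,\mathrm{diam}(G)\}$ with $f(v)\le e(v)$; its cost is $\sum_v f(v)$; it is dominating if every $u$ has some $v$ with $f(v)\ge 1$ and $d(u,v)\le f(v)$; a dominating broadcast is minimal if decreasing $f(v)$ for any $v$ with $f(v)>0$ destroys domination. $\Gamma_b(G)$ is the maximum cost of a minimal dominating broadcast, and $G$ is called diametrical if $\Gamma_b(G)=\mathrm{diam}(G)$. *)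

theory Defs
  imports Main
begin

text \<open>A finite graph is given by a vertex set V and a symmetric adjacency predicate E.
  Distances are lengths of shortest walks inside V.\<close>

definition adj_rel :: "'a set \<Rightarrow> ('a \<Rightarrow> 'a \<Rightarrow> bool) \<Rightarrow> ('a \<times> 'a) set" where
  "adj_rel V E = {(u, v). u \<in> V \<and> v \<in> V \<and> E u v}"

definition gdist :: "'a set \<Rightarrow> ('a \<Rightarrow> 'a \<Rightarrow> bool) \<Rightarrow> 'a \<Rightarrow> 'a \<Rightarrow> nat" where
  "gdist V E u v = (LEAST k. (u, v) \<in> adj_rel V E ^^ k)"

definition ecc :: "'a set \<Rightarrow> ('a \<Rightarrow> 'a \<Rightarrow> bool) \<Rightarrow> 'a \<Rightarrow> nat" where
  "ecc V E v = Max ((gdist V E v) ` V)"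

definition diam :: "'a set \<Rightarrow> ('a \<Rightarrow> 'a \<Rightarrow> bool) \<Rightarrow> nat" where
  "diam V E = Max ((ecc V E) ` V)"

definition is_broadcast :: "'a set \<Rightarrow> ('a \<Rightarrow> 'a \<Rightarrow> bool) \<Rightarrow> ('a \<Rightarrow> nat) \<Rightarrow> bool" where
  "is_broadcast V E f \<longleftrightarrow> (\<forall>v\<in>V. f v \<le> ecc V E v) \<and> (\<forall>v. v \<notin> V \<longrightarrow> f v = 0)"

definition bcost :: "'a set \<Rightarrow> ('a \<Rightarrow> nat) \<Rightarrow> nat" where
  "bcost V f = (\<Sum>v\<in>V. f v)"

definition dominating :: "'a set \<Rightarrow> ('a \<Rightarrow> 'a \<Rightarrow> bool) \<Rightarrow> ('a \<Rightarrow> nat) \<Rightarrow> bool" where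
  "dominating V E f \<longleftrightarrow> (\<forall>u\<in>V. \<exists>v\<in>V. f v \<ge> 1 \<and> gdist V E u v \<le> f v)"

definition minimal_dominating :: "'a set \<Rightarrow> ('a \<Rightarrow> 'a \<Rightarrow> bool) \<Rightarrow> ('a \<Rightarrow> nat) \<Rightarrow> bool" where
  "minimal_dominating V E f \<longleftrightarrow> is_broadcast V E f \<and> dominating V E f \<and>
     (\<forall>v\<in>V. f v > 0 \<longrightarrow> \<not> dominating V E (f(v := f v - 1)))"

definition upper_broadcast_number :: "'a set \<Rightarrow> ('a \<Rightarrow> 'a \<Rightarrow> bool) \<Rightarrow> nat" where
  "upper_broadcast_number V E = Max {bcost V f | f. minimal_dominating V E f}"

definition diametrical :: "'a set \<Rightarrow> ('a \<Rightarrow> 'a \<Rightarrow> bool) \<Rightarrow> bool" where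
  "diametrical V E \<longleftrightarrow> upper_broadcast_number V E = diam V E"

definition cycle_V :: "nat \<Rightarrow> nat set" where
  "cycle_V n = {0..<n}"

definition cycle_E :: "nat \<Rightarrow> nat \<Rightarrow> nat \<Rightarrow> bool" where
  "cycle_E n i j \<longleftrightarrow> j = (i + 1) mod n \<or> i = (j + 1) mod n"

end

theory Submission
  imports Defs
begin

text \<open>A single vertex broadcasting at full eccentricity is always a minimal dominating broadcast,
  so \<open>diam \<le> \<Gamma>\<^sub>b\<close> and diametricality amounts to every minimal dominating broadcast costing at most
  the diameter. In a minimal broadcast, a vertex broadcasting at its eccentricity already dominates
  everything, so it must be the only broadcasting vertex. On \<open>C\<^sub>n\<close> every eccentricity is
  \<open>\<lfloor>n/2\<rfloor>\<close>; for \<open>n \<le> 5\<close> this leaves broadcasts of strength at most 1, and a finite check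
  shows their cost is at most 2. For \<open>n \<ge> 6\<close> two vertices at distance 1 or 2, each broadcasting
  with strength \<open>\<lfloor>(n-2)/2\<rfloor>\<close>, form a minimal dominating broadcast of cost exceeding \<open>\<lfloor>n/2\<rfloor>\<close>.\<close>

subsection \<open>Distances and broadcasts in symmetric graphs\<close>

lemma relpow_sym:
  assumes "sym R" "(x, y) \<in> R ^^ k"
  shows "(y, x) \<in> R ^^ k"
  using assms(2)
proof (induction k arbitrary: y)
  case 0
  then show ?case by simp
next
  case (Suc k)
  from Suc.prems obtain z where "(x, z) \<in> R ^^ k" "(z, y) \<in> R" by (rule relpow_Suc_E)
  then show ?case using Suc.IH assms(1) by (meson relpow_Suc_I2 symD)
qed

lemma sym_adj_rel: "symp E \<Longrightarrow> sym (adj_rel V E)"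
  by (auto simp: adj_rel_def sym_def dest: sympD)

lemma gdist_commute:
  assumes "symp E"
  shows "gdist V E u v = gdist V E v u"
  using relpow_sym[OF sym_adj_rel[OF assms]] unfolding gdist_def by metis

lemma gdist_le_ecc: "finite V \<Longrightarrow> u \<in> V \<Longrightarrow> gdist V E v u \<le> ecc V E v"
  unfolding ecc_def by (simp add: Max_ge)

lemma ecc_attained:
  assumes "finite V" "V \<noteq> {}"
  obtains u where "u \<in> V" "gdist V E v u = ecc V E v"
proof -
  have "ecc V E v \<in> gdist V E v ` V"
    unfolding ecc_def using assms by (intro Max_in) auto
  then show ?thesis using that by (metis imageE)
qed

lemma finite_minimal_dominating_costs:
  assumes "finite V"
  shows "finite {bcost V f | f. minimal_dominating V E f}"
proof (rule finite_subset)
  show "{bcost V f | f. minimal_dominating V E f} \<subseteq> {..sum (ecc V E) V}"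
    by (auto simp: minimal_dominating_def is_broadcast_def bcost_def intro: sum_mono)
qed simp

lemma minimal_dominating_eccentric_vertex:
  assumes "finite V" "symp E" "v \<in> V" "0 < ecc V E v"
  shows "minimal_dominating V E ((\<lambda>_. 0)(v := ecc V E v))"
proof -
  let ?f = "(\<lambda>_. 0)(v := ecc V E v)"
  have gdist_sym: "gdist V E u v = gdist V E v u" for u
    by (rule gdist_commute[OF assms(2)])
  have "dominating V E ?f"
    unfolding dominating_def
  proof
    fix u assume "u \<in> V"
    then show "\<exists>w\<in>V. 1 \<le> ?f w \<and> gdist V E u w \<le> ?f w"
      using assms(1,3,4) gdist_le_ecc gdist_sym by (intro bexI[of _ v]) auto
  qed
  moreover have "\<not> dominating V E (?f(v := ?f v - 1))"
  proof
    assume "dominating V E (?f(v := ?f v - 1))"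
    then have dom: "dominating V E ((\<lambda>_. 0)(v := ecc V E v - 1))"
      by simp
    obtain u where u: "u \<in> V" "gdist V E v u = ecc V E v"
      by (rule ecc_attained[OF assms(1)]) (use assms(3) in auto)
    from dom u(1) have "\<exists>w\<in>V. 1 \<le> ((\<lambda>_. 0)(v := ecc V E v - 1)) w \<and>
        gdist V E u w \<le> ((\<lambda>_. 0)(v := ecc V E v - 1)) w"
      unfolding dominating_def by (rule bspec)
    then show False
      using u(2) gdist_sym assms(4) by (auto split: if_splits)
  qed
  ultimately show ?thesis
    using assms(3) by (auto simp: minimal_dominating_def is_broadcast_def)
qed

lemma bcost_single_vertex:
  assumes "finite V" "v \<in> V"
  shows "bcost V ((\<lambda>_. 0)(v := k)) = k"
  using assms by (simp add: bcost_def fun_upd_def)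

lemma diametrical_iff_costs_le_diam:
  assumes "finite V" "V \<noteq> {}" "symp E" "0 < diam V E"
  shows "diametrical V E \<longleftrightarrow> (\<forall>f. minimal_dominating V E f \<longrightarrow> bcost V f \<le> diam V E)"
proof -
  let ?costs = "{bcost V f | f. minimal_dominating V E f}"
  have "diam V E \<in> ecc V E ` V"
    unfolding diam_def using assms(1,2) by (intro Max_in) auto
  then obtain v where v: "v \<in> V" "ecc V E v = diam V E" by auto
  then have diam_cost: "diam V E \<in> ?costs"
    using minimal_dominating_eccentric_vertex[OF assms(1,3) v(1)] bcost_single_vertex[OF assms(1) v(1)]
      assms(4) by (metis (mono_tags, lifting) mem_Collect_eq)
  have fin: "finite ?costs"
    by (rule finite_minimal_dominating_costs[OF assms(1)])
  have "diametrical V E \<longleftrightarrow> Max ?costs \<le> diam V E"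
    unfolding diametrical_def upper_broadcast_number_def
    using Max_ge[OF fin diam_cost] by linarith
  also have "\<dots> \<longleftrightarrow> (\<forall>c\<in>?costs. c \<le> diam V E)"
    using fin diam_cost by (subst Max_le_iff) auto
  finally show ?thesis by blast
qed

lemma bcost_minimal_dominating_eccentric:
  assumes "finite V" "symp E" "minimal_dominating V E f"
    and "v \<in> V" "f v = ecc V E v" "0 < f v"
  shows "bcost V f = f v"
proof -
  have "f w = 0" if "w \<in> V - {v}" for w
  proof (rule ccontr)
    assume "f w \<noteq> 0"
    have "gdist V E u v \<le> f v" if "u \<in> V" for u
      using gdist_le_ecc[OF assms(1) that] gdist_commute[OF assms(2)] assms(5) by metis
    then have "dominating V E (f(w := f w - 1))"
      unfolding dominating_def using assms(4,6) that by force
    then show False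
      using assms(3) that \<open>f w \<noteq> 0\<close> unfolding minimal_dominating_def by blast
  qed
  then show ?thesis
    unfolding bcost_def using sum.remove[OF assms(1,4), of f] by simp
qed

subsection \<open>Distances in the cycle\<close>

definition cycle_dist :: "nat \<Rightarrow> nat \<Rightarrow> nat \<Rightarrow> nat" where
  "cycle_dist n i j = (if i \<le> j then min (j - i) (n - (j - i)) else min (i - j) (n - (i - j)))"

lemma mem_cycle_V [simp]: "x \<in> cycle_V n \<longleftrightarrow> x < n"
  by (simp add: cycle_V_def)

lemma finite_cycle_V [simp]: "finite (cycle_V n)"
  by (simp add: cycle_V_def)

lemma cycle_dist_le_half: "cycle_dist n i j \<le> n div 2"
  by (auto simp: cycle_dist_def)

lemma symp_cycle_E: "symp (cycle_E n)"
  by (auto simp: symp_def cycle_E_def)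

lemma cycle_E_iff:
  assumes "i < n" "j < n"
  shows "cycle_E n i j \<longleftrightarrow> j = i + 1 \<or> i = j + 1 \<or> (i = n - 1 \<and> j = 0) \<or> (j = n - 1 \<and> i = 0)"
proof -
  have "(k + 1) mod n = (if k + 1 = n then 0 else k + 1)" if "k < n" for k
    using that by auto
  then show ?thesis
    unfolding cycle_E_def using assms by auto
qed

lemma cycle_dist_adjacent:
  assumes "i < n" "l < n" "j < n" "cycle_E n l j"
  shows "cycle_dist n i j \<le> cycle_dist n i l + 1"
  using assms(4) unfolding cycle_E_iff[OF assms(2,3)]
  using assms(1-3) by (auto simp: cycle_dist_def)

lemma cycle_dist_le_walk:
  assumes "(i, j) \<in> adj_rel (cycle_V n) (cycle_E n) ^^ k" "i < n"
  shows "cycle_dist n i j \<le> k \<and> j < n"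
  using assms(1)
proof (induction k arbitrary: j)
  case 0
  then show ?case using assms(2) by (simp add: cycle_dist_def)
next
  case (Suc k)
  from Suc.prems obtain l where l: "(i, l) \<in> adj_rel (cycle_V n) (cycle_E n) ^^ k"
    "(l, j) \<in> adj_rel (cycle_V n) (cycle_E n)" by (rule relpow_Suc_E)
  then have "l < n" "j < n" "cycle_E n l j"
    by (auto simp: adj_rel_def)
  with Suc.IH[OF l(1)] cycle_dist_adjacent[OF assms(2) this] show ?case by auto
qed

lemma cycle_walk_forward:
  assumes "i < n"
  shows "(i, (i + k) mod n) \<in> adj_rel (cycle_V n) (cycle_E n) ^^ k"
proof (induction k)
  case 0
  then show ?case using assms by simp
next
  case (Suc k)
  have "((i + k) mod n, (i + Suc k) mod n) \<in> adj_rel (cycle_V n) (cycle_E n)"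
    using assms by (auto simp: adj_rel_def cycle_E_def mod_Suc_eq)
  then show ?case by (rule relpow_Suc_I[OF Suc.IH])
qed

lemma cycle_walks_between:
  assumes "a \<le> b" "b < n"
  shows "(a, b) \<in> adj_rel (cycle_V n) (cycle_E n) ^^ (b - a)"
    and "(a, b) \<in> adj_rel (cycle_V n) (cycle_E n) ^^ (n - (b - a))"
proof -
  show "(a, b) \<in> adj_rel (cycle_V n) (cycle_E n) ^^ (b - a)"
    using cycle_walk_forward[of a n "b - a"] assms by simp
  have "(b + (n - (b - a))) mod n = a"
    using assms by (simp add: add.commute)
  then have "(b, a) \<in> adj_rel (cycle_V n) (cycle_E n) ^^ (n - (b - a))"
    using cycle_walk_forward[of b n "n - (b - a)"] assms by simp
  then show "(a, b) \<in> adj_rel (cycle_V n) (cycle_E n) ^^ (n - (b - a))"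
    using relpow_sym[OF sym_adj_rel[OF symp_cycle_E]] by blast
qed

lemma cycle_walk_cycle_dist:
  assumes "i < n" "j < n"
  shows "(i, j) \<in> adj_rel (cycle_V n) (cycle_E n) ^^ cycle_dist n i j"
proof (cases "i \<le> j")
  case True
  then show ?thesis
    using cycle_walks_between[OF True assms(2)] by (simp add: cycle_dist_def min_def)
next
  case False
  then show ?thesis
    using cycle_walks_between[of j i n] assms(1) relpow_sym[OF sym_adj_rel[OF symp_cycle_E]]
    by (simp add: cycle_dist_def min_def)
qed

lemma gdist_cycle:
  assumes "i < n" "j < n"
  shows "gdist (cycle_V n) (cycle_E n) i j = cycle_dist n i j"
  unfolding gdist_def
  by (rule Least_equality) (use cycle_walk_cycle_dist[OF assms] cycle_dist_le_walk assms in auto)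

lemma ecc_cycle:
  assumes "v < n"
  shows "ecc (cycle_V n) (cycle_E n) v = n div 2"
proof -
  let ?w = "if v + n div 2 < n then v + n div 2 else v + n div 2 - n"
  have "?w < n" "cycle_dist n v ?w = n div 2"
    using assms by (auto simp: cycle_dist_def)
  then have antipode: "n div 2 \<in> cycle_dist n v ` cycle_V n"
    by force
  have "gdist (cycle_V n) (cycle_E n) v ` cycle_V n = cycle_dist n v ` cycle_V n"
    using assms by (intro image_cong) (auto simp: gdist_cycle)
  then show ?thesis
    unfolding ecc_def
    by (intro Max_eqI) (use antipode cycle_dist_le_half in \<open>auto simp del: mem_cycle_V\<close>)
qed

lemma diam_cycle:
  assumes "0 < n"
  shows "diam (cycle_V n) (cycle_E n) = n div 2"
proof -
  have "ecc (cycle_V n) (cycle_E n) ` cycle_V n = {n div 2}"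
    using assms by (auto simp: ecc_cycle image_iff)
  then show ?thesis unfolding diam_def by simp
qed

lemma is_broadcast_cycle_iff:
  "is_broadcast (cycle_V n) (cycle_E n) f \<longleftrightarrow> (\<forall>v<n. f v \<le> n div 2) \<and> (\<forall>v\<ge>n. f v = 0)"
  by (auto simp: is_broadcast_def ecc_cycle)

lemma dominating_cycle_iff:
  "dominating (cycle_V n) (cycle_E n) f \<longleftrightarrow> (\<forall>u<n. \<exists>v<n. 1 \<le> f v \<and> cycle_dist n u v \<le> f v)"
  unfolding dominating_def Ball_def Bex_def mem_cycle_V by (metis gdist_cycle)

subsection \<open>Minimal dominating broadcasts on cycles\<close>

lemma bcost_cycle: "bcost (cycle_V n) f = (\<Sum>v<n. f v)"
  by (simp add: bcost_def cycle_V_def atLeast0LessThan)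

lemma cycle_minimal_dominating_cost_gt_half:
  assumes "6 \<le> n"
  shows "\<exists>f. minimal_dominating (cycle_V n) (cycle_E n) f \<and> n div 2 < bcost (cycle_V n) f"
proof -
  define m where "m = (n - 2) div 2"
  define t where "t = n - 2 * m - 1"
  let ?f = "(\<lambda>_. 0)(m := m, m + t := m)"
  have t: "1 \<le> t" "t \<le> 2" "n = 2 * m + t + 1" "2 \<le> m"
    using assms unfolding m_def t_def by auto
  have cover: "cycle_dist n u m \<le> m \<or> cycle_dist n u (m + t) \<le> m" if "u < n" for u
    using that t by (auto simp: cycle_dist_def)
  have "dominating (cycle_V n) (cycle_E n) ?f"
    unfolding dominating_cycle_iff
  proof (intro allI impI)
    fix u assume "u < n"
    from cover[OF this] show "\<exists>v<n. 1 \<le> ?f v \<and> cycle_dist n u v \<le> ?f v"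
    proof
      assume "cycle_dist n u m \<le> m"
      then show ?thesis using t by (intro exI[of _ m]) auto
    next
      assume "cycle_dist n u (m + t) \<le> m"
      then show ?thesis using t by (intro exI[of _ "m + t"]) auto
    qed
  qed
  \<comment> \<open>vertex \<open>0\<close> is heard only from \<open>m\<close>, and vertex \<open>n - 1\<close> only from \<open>m + t\<close>\<close>
  moreover have "\<not> dominating (cycle_V n) (cycle_E n) (?f(m := ?f m - 1))"
    unfolding dominating_cycle_iff using t
    by (auto dest!: spec[of _ 0] simp: cycle_dist_def split: if_splits)
  moreover have "\<not> dominating (cycle_V n) (cycle_E n) (?f(m + t := ?f (m + t) - 1))"
    unfolding dominating_cycle_iff using t
    by (auto dest!: spec[of _ "n - 1"] simp: cycle_dist_def split: if_splits)
  ultimately have "minimal_dominating (cycle_V n) (cycle_E n) ?f"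
    unfolding minimal_dominating_def is_broadcast_cycle_iff using t by auto
  moreover have "bcost (cycle_V n) ?f = sum ?f {m, m + t}"
    unfolding bcost_def using t by (intro sum.mono_neutral_right) auto
  ultimately show ?thesis
    using t by (intro exI[of _ ?f]) auto
qed

text \<open>A finite check over the \<open>2\<^sup>n\<close> possible broadcasts.\<close>

lemma cycle_minimal_dominating_unit_cost_le_2:
  assumes "n \<in> {4, 5}" "minimal_dominating (cycle_V n) (cycle_E n) f" "\<forall>v<n. f v \<le> 1"
  shows "bcost (cycle_V n) f \<le> 2"
proof -
  have unit: "\<forall>v<n. f v = 0 \<or> f v = 1"
    using assms(3) by fastforce
  have minimal: "\<forall>v<n. 0 < f v \<longrightarrow>
      \<not> (\<forall>u<n. \<exists>w<n. 1 \<le> (f(v := f v - 1)) w \<and> cycle_dist n u w \<le> (f(v := f v - 1)) w)"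
    using assms(2) unfolding minimal_dominating_def dominating_cycle_iff by auto
  from assms(1) consider "n = Suc (Suc (Suc (Suc 0)))" | "n = Suc (Suc (Suc (Suc (Suc 0))))"
    by auto
  then show ?thesis
    unfolding bcost_cycle
    by cases (use minimal unit in \<open>simp only: All_less_Suc Ex_less_Suc not_less0 simp_thms,
        (elim conjE disjE; simp add: cycle_dist_def)\<close>)+
qed

lemma cycle_minimal_dominating_cost_le_half:
  assumes "n \<in> {3, 4, 5}" "minimal_dominating (cycle_V n) (cycle_E n) f"
  shows "bcost (cycle_V n) f \<le> n div 2"
proof (cases "\<exists>v<n. f v = n div 2")
  case True
  then obtain v where "v < n" "f v = n div 2" by blast
  then show ?thesis
    using bcost_minimal_dominating_eccentric[OF _ symp_cycle_E assms(2)] assms(1)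
    by (auto simp: ecc_cycle)
next
  case False
  then have weak: "\<forall>v<n. f v < n div 2"
    using assms(2) by (auto simp: minimal_dominating_def is_broadcast_cycle_iff le_less)
  show ?thesis
  proof (cases "n = 3")
    case True
    have "\<exists>v<n. 1 \<le> f v"
      using assms(2) \<open>n = 3\<close> unfolding minimal_dominating_def dominating_cycle_iff
      by (metis zero_less_numeral)
    with weak True show ?thesis
      by fastforce
  next
    case False
    with assms(1) have "n \<in> {4, 5}" "n div 2 = 2" "\<forall>v<n. f v \<le> 1"
      using weak by auto
    then show ?thesis
      using cycle_minimal_dominating_unit_cost_le_2[OF _ assms(2)] by simp
  qed
qed

theorem mainTheorem12:
  fixes n :: nat
  assumes "n \<ge> 3"
  shows "diametrical (cycle_V n) (cycle_E n) \<longleftrightarrow> n \<in> {3, 4, 5}"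
proof -
  have diam: "diam (cycle_V n) (cycle_E n) = n div 2"
    using assms by (simp add: diam_cycle)
  have "cycle_V n \<noteq> {}"
    using assms by (auto simp: cycle_V_def)
  then have "diametrical (cycle_V n) (cycle_E n) \<longleftrightarrow>
      (\<forall>f. minimal_dominating (cycle_V n) (cycle_E n) f \<longrightarrow> bcost (cycle_V n) f \<le> n div 2)"
    using diametrical_iff_costs_le_diam[OF finite_cycle_V _ symp_cycle_E] diam assms by simp
  also have "\<dots> \<longleftrightarrow> n \<in> {3, 4, 5}"
  proof
    assume all: "\<forall>f. minimal_dominating (cycle_V n) (cycle_E n) f \<longrightarrow> bcost (cycle_V n) f \<le> n div 2"
    show "n \<in> {3, 4, 5}"
    proof (rule ccontr)
      assume "n \<notin> {3, 4, 5}"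
      with assms have "6 \<le> n" by auto
      then show False
        using cycle_minimal_dominating_cost_gt_half all by (meson not_le)
    qed
  qed (use cycle_minimal_dominating_cost_le_half in blast)
  finally show ?thesis .
qed

end
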